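(* Let $N\ge2$ and let $b(t)$ be the Brownian motion on the spider graph $Sp_N$ with Kirchhoff gluing at the origin, started at the origin. For $L>0$ let $\tau_{L,1}=\min\{t: b(t)\text{ is the point }x_1=L\text{ on leg }l_1\}$ (no condition on the motion along the other legs). Then for every $\lambda>0$, $u(\lambda,L):=E_0e^{-\lambda\tau_{L,1}}$ satisfies $$u(\lambda,L)=\frac{2}{N}e^{-\sqrt{2\lambda}L}+\frac{2}{N}\Big(1-\frac{2}{N}\Big)e^{-3\sqrt{2\lambda}L}+\frac{2}{N}\Big(1-\frac{2}{N}\Big)^2e^{-5\sqrt{2\lambda}L}+\cdots=\sum_{n=0}^\infty\frac{2}{N}\Big(1-\frac{2}{N}\Big)^ne^{-(2n+1)\sqrt{2\lambda}L}.$$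
   Context: The spider graph $Sp_N$ consists of $N$ half-lines (legs) $l_1,\dots,l_N$, each a copy of $[0,\infty)$ with coordinate $x_i\ge0$, glued at their common endpoint $0$. The Brownian motion $b(t)$ on $Sp_N$ is the continuous strong Markov process with generator $\frac12\frac{d^2}{dx_i^2}$ on each leg, acting on functions continuous on $Sp_N$, twice differentiable on each leg, and satisfying Kirchhoff's condition $\sum_{i=1}^N f_i'(0)=0$ ($f_i'(0)$ the one-sided derivative at $0$ along leg $l_i$). Equivalently, away from $0$ it is a standard one-dimensional Brownian motion along the leg and from $0$ it enters each leg with equal probability $1/N$. *)

theory Defs
  imports "HOL-Probability.Probability"
begin

text \<open>The spider graph Sp_N embedded in the complex plane: leg l_(k+1), k < N, is the
ray through cis(2 pi k / N); the point with coordinate x on leg l_(k+1) is spider_pt N k x. The Euclidean topology on this set coincides with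
the graph (path) topology of Sp_N, since there are finitely many legs.\<close>

definition spider_pt :: "nat \<Rightarrow> nat \<Rightarrow> real \<Rightarrow> complex" where
  "spider_pt N k x = complex_of_real x * cis (2 * pi * real k / real N)"

definition spider :: "nat \<Rightarrow> complex set" where
  "spider N = {spider_pt N k x | k x. k < N \<and> 0 \<le> x}"

text \<open>Domain of the generator: f is bounded and continuous on Sp_N, on each leg
x \<mapsto> f(x) is twice continuously differentiable on [0,\<infinity>) (one-sided at 0), the second
derivatives glue to a bounded continuous function h on Sp_N (so that (1/2) h = Gf), and
Kirchhoff's condition sum_i f_i'(0) = 0 holds. The pair (f,h) records f and f''.\<close>

definition spider_gen_dom :: "nat \<Rightarrow> (complex \<Rightarrow> real) \<Rightarrow> (complex \<Rightarrow> real) \<Rightarrow> bool" where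
  "spider_gen_dom N f h \<longleftrightarrow>
     continuous_on (spider N) f \<and> bounded (f ` spider N) \<and>
     continuous_on (spider N) h \<and> bounded (h ` spider N) \<and>
     (\<exists>d :: nat \<Rightarrow> real \<Rightarrow> real.
        (\<forall>k<N. \<forall>x\<ge>0.
           ((\<lambda>y. f (spider_pt N k y)) has_real_derivative d k x) (at x within {0..}) \<and>
           (d k has_real_derivative h (spider_pt N k x)) (at x within {0..})) \<and>
        (\<Sum>k<N. d k 0) = 0)"

definition nat_filt :: "'a measure \<Rightarrow> (real \<Rightarrow> 'a \<Rightarrow> complex) \<Rightarrow> real \<Rightarrow> 'a set set" where
  "nat_filt M b s = sigma_sets (space M)
     {b r -` B \<inter> space M | r B. 0 \<le> r \<and> r \<le> s \<and> B \<in> sets borel}"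

definition is_martingale :: "'a measure \<Rightarrow> (real \<Rightarrow> 'a set set) \<Rightarrow> (real \<Rightarrow> 'a \<Rightarrow> real) \<Rightarrow> bool" where
  "is_martingale M F X \<longleftrightarrow>
     (\<forall>t\<ge>0. integrable M (X t)) \<and>
     (\<forall>s t A. 0 \<le> s \<longrightarrow> s \<le> t \<longrightarrow> A \<in> F s \<longrightarrow>
        (\<integral>\<omega>. (X t \<omega> - X s \<omega>) * indicator A \<omega> \<partial>M) = 0)"

text \<open>Brownian motion on Sp_N (Kirchhoff gluing) started at the origin, characterised
as a solution of the (well-posed) martingale problem for its generator:
b is a process with continuous paths in Sp_N, b 0 = 0, and for every (f, f'') in the
generator domain, f(b t) - f(b 0) - \<integral>_0^t (1/2) f''(b u) du is a martingale with
respect to the natural filtration of b.\<close>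

definition spider_BM :: "nat \<Rightarrow> 'a measure \<Rightarrow> (real \<Rightarrow> 'a \<Rightarrow> complex) \<Rightarrow> bool" where
  "spider_BM N M b \<longleftrightarrow>
     prob_space M \<and>
     (\<forall>t. b t \<in> borel_measurable M) \<and>
     (\<forall>\<omega>\<in>space M. continuous_on {0..} (\<lambda>t. b t \<omega>) \<and> (\<forall>t\<ge>0. b t \<omega> \<in> spider N)) \<and>
     (\<forall>\<omega>\<in>space M. b 0 \<omega> = 0) \<and>
     (\<forall>f h. spider_gen_dom N f h \<longrightarrow>
        is_martingale M (nat_filt M b)
          (\<lambda>t \<omega>. f (b t \<omega>) - f (b 0 \<omega>) - integral {0..t} (\<lambda>u. h (b u \<omega>) / 2)))"

text \<open>E_0 exp(-lambda tau) where tau is the first hitting time of the point x_1 = L on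
leg l_1 (exp(-lambda tau) := 0 on paths that never hit).\<close>

definition hit_laplace :: "'a measure \<Rightarrow> (real \<Rightarrow> 'a \<Rightarrow> complex) \<Rightarrow> real \<Rightarrow> real \<Rightarrow> real" where
  "hit_laplace M b lam L = (\<integral>\<omega>.
     (if \<exists>t\<ge>0. b t \<omega> = complex_of_real L
      then exp (- lam * Inf {t. 0 \<le> t \<and> b t \<omega> = complex_of_real L}) else 0) \<partial>M)"

end

theory Submission
  imports Defs
begin

text \<open>Put s = sqrt(2 lam). Let f be the bounded function on Sp_N equal to C e^(-s x) on the
legs l_2, ..., l_N and to (C/2) (N e^(s x) - (N - 2) e^(-s x)) for 0 <= x <= L on l_1, where
C = 2 / (N e^(s L) - (N - 2) e^(-s L)) makes f = 1 at the target point x_1 = L. Both profiles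
solve f''/2 = lam f, they agree at the origin and satisfy Kirchhoff's condition there, so
up to the hitting time tau the process e^(-lam t) f(b t) has constant expectation; stopping
at min tau T and letting T tend to infinity gives E_0 e^(-lam tau) = f(0) = C, and C expands
as a geometric series in (1 - 2/N) e^(-2 s L).

The martingale problem only yields the martingales X t = f(b t) - f(b 0) - int_0^t f''(b u)/2 du,
so the stopped discounted process is handled through Riemann-Stieltjes sums over the grid
T j / n with the integrand restricted to the events "target not hit up to time T j / n";
these events lie in the natural filtration because the paths are continuous.\<close>

lemma has_real_derivative_glue:
  fixes P E P' E' :: "real \<Rightarrow> real"
  assumes dP: "\<And>x. (P has_real_derivative P' x) (at x)"
    and dE: "\<And>x. (E has_real_derivative E' x) (at x)"
    and eq0: "P L = E L" and eq1: "P' L = E' L"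
  shows "((\<lambda>x. if x \<le> L then P x else E x) has_real_derivative
           (if x \<le> L then P' x else E' x)) (at x)"
proof -
  define Q where "Q = (\<lambda>x. if x \<le> L then P x else E x)"
  consider "x < L" | "x > L" | "x = L" by linarith
  then have "(Q has_real_derivative (if x \<le> L then P' x else E' x)) (at x)"
  proof cases
    case 1
    have "(Q has_real_derivative P' x) (at x)"
      by (rule has_field_derivative_transform_within_open[OF dP[of x], of "{..<L}"])
         (use 1 in \<open>auto simp: Q_def\<close>)
    then show ?thesis using 1 by simp
  next
    case 2
    have "(Q has_real_derivative E' x) (at x)"
      by (rule has_field_derivative_transform_within_open[OF dE[of x], of "{L<..}"])
         (use 2 in \<open>auto simp: Q_def\<close>)
    then show ?thesis using 2 by simp
  next
    case 3
    have l0: "((\<lambda>y. (P y - P L) / (y - L)) \<longlongrightarrow> P' L) (at_left L)"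
      using dP[of L] unfolding has_field_derivative_iff
      by (rule tendsto_mono[rotated]) (simp add: at_within_le_at)
    have l: "((\<lambda>y. (Q y - Q L) / (y - L)) \<longlongrightarrow> P' L) (at_left L)"
      by (rule tendsto_cong[THEN iffD1, OF _ l0])
         (auto simp: eventually_at_filter Q_def)
    have r0: "((\<lambda>y. (E y - E L) / (y - L)) \<longlongrightarrow> E' L) (at_right L)"
      using dE[of L] unfolding has_field_derivative_iff
      by (rule tendsto_mono[rotated]) (simp add: at_within_le_at)
    have r: "((\<lambda>y. (Q y - Q L) / (y - L)) \<longlongrightarrow> P' L) (at_right L)"
      by (rule tendsto_cong[THEN iffD1, OF _ r0[unfolded eq1[symmetric]]])
         (auto simp: eventually_at_filter Q_def eq0)
    show ?thesis unfolding has_field_derivative_iff using 3 filterlim_split_at[OF l r]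
      by simp
  qed
  then show ?thesis by (simp add: Q_def)
qed

lemma bounded_if_le_image:
  fixes p q :: "real \<Rightarrow> real"
  assumes "continuous_on {0..L} p" "\<And>x. x \<ge> L \<Longrightarrow> \<bar>q x\<bar> \<le> B"
  shows "bounded ((\<lambda>x. if x \<le> L then p x else q x) ` {0..})"
proof -
  have "bounded (p ` {0..L})"
    by (rule compact_imp_bounded[OF compact_continuous_image[OF assms(1) compact_Icc]])
  moreover have "bounded (q ` {L..})"
    by (rule boundedI) (use assms(2) in auto)
  ultimately show ?thesis
    by (rule bounded_subset[OF bounded_Un[THEN iffD2, OF conjI]]) auto
qed

lemma (in finite_measure) bounded_convergence:
  fixes X :: "nat \<Rightarrow> 'a \<Rightarrow> real"
  assumes "\<And>n. X n \<in> borel_measurable M"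
    and lim: "\<And>\<omega>. \<omega> \<in> space M \<Longrightarrow> (\<lambda>n. X n \<omega>) \<longlonglongrightarrow> Y \<omega>"
    and bound: "\<And>n \<omega>. \<omega> \<in> space M \<Longrightarrow> \<bar>X n \<omega>\<bar> \<le> B"
  shows "Y \<in> borel_measurable M" and "(\<lambda>n. integral\<^sup>L M (X n)) \<longlonglongrightarrow> integral\<^sup>L M Y"
proof -
  show Y: "Y \<in> borel_measurable M" by (rule borel_measurable_LIMSEQ_real[OF lim assms(1)])
  show "(\<lambda>n. integral\<^sup>L M (X n)) \<longlonglongrightarrow> integral\<^sup>L M Y"
    by (rule integral_dominated_convergence[OF Y assms(1), where w = "\<lambda>_. B"])
       (use lim bound in auto)
qed

lemma abs_le_SOME_bound:
  fixes g :: "'b \<Rightarrow> real"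
  assumes "bounded (g ` S)" "z \<in> S"
  shows "\<bar>g z\<bar> \<le> (SOME B. \<forall>z\<in>S. \<bar>g z\<bar> \<le> B)"
proof -
  from assms(1) have "\<exists>B. \<forall>z\<in>S. \<bar>g z\<bar> \<le> B" unfolding bounded_iff by auto
  from someI_ex[OF this] show ?thesis using assms(2) by blast
qed

lemma abs_exp_mult_le:
  fixes lam u y :: real
  assumes "lam \<ge> 0" "u \<ge> 0" "\<bar>y\<bar> \<le> B"
  shows "\<bar>exp (- lam * u) * y\<bar> \<le> B"
proof -
  have "exp (- lam * u) \<le> 1" using assms by simp
  then have "exp (- lam * u) * \<bar>y\<bar> \<le> 1 * B" using assms(3) by (intro mult_mono) auto
  then show ?thesis by (simp add: abs_mult)
qed

section \<open>Functions on the spider\<close>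

lemma spider_pt_0 [simp]: "spider_pt N 0 x = complex_of_real x"
  by (simp add: spider_pt_def)

lemma norm_spider_pt [simp]: "x \<ge> 0 \<Longrightarrow> cmod (spider_pt N k x) = x"
  by (simp add: spider_pt_def norm_mult)

lemma spider_pt_not_nonneg_real:
  assumes "0 < k" "k < N" "x > 0"
  shows "\<not> (Im (spider_pt N k x) = 0 \<and> 0 \<le> Re (spider_pt N k x))"
proof
  assume h: "Im (spider_pt N k x) = 0 \<and> 0 \<le> Re (spider_pt N k x)"
  define t where "t = 2 * pi * real k / real N"
  have "0 < t" "t < 2 * pi" using assms by (simp_all add: t_def field_simps)
  have "sin t = 0" and c: "cos t \<ge> 0" using h assms
    by (auto simp: spider_pt_def t_def zero_le_mult_iff)
  then have "sin (t - pi) = 0" by (simp add: sin_diff)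
  moreover have "- pi < t - pi" "t - pi < pi" using \<open>0 < t\<close> \<open>t < 2 * pi\<close> by linarith+
  ultimately have "t - pi = 0" by (metis sin_eq_0_pi)
  then have "cos t = -1" by simp
  with c show False by simp
qed

text \<open>Since l_2, ..., l_N play symmetric roles in the hitting problem, test functions only need
a profile F along l_1 and a common profile G along the other legs.\<close>

definition leg_fun :: "(real \<Rightarrow> real) \<Rightarrow> (real \<Rightarrow> real) \<Rightarrow> complex \<Rightarrow> real" where
  "leg_fun F G z = (if Im z = 0 \<and> 0 \<le> Re z then F (Re z) else G (cmod z))"

lemma leg_fun_of_real: "leg_fun F G (complex_of_real x) = (if 0 \<le> x then F x else G \<bar>x\<bar>)"
  by (simp add: leg_fun_def)

lemma leg_fun_spider_pt:
  assumes "k < N" "x \<ge> 0" "F 0 = G 0"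
  shows "leg_fun F G (spider_pt N k x) = (if k = 0 then F x else G x)"
proof (cases "k = 0 \<or> x = 0")
  case True
  then show ?thesis using assms by (auto simp: leg_fun_def spider_pt_def)
next
  case False
  then have "\<not> (Im (spider_pt N k x) = 0 \<and> 0 \<le> Re (spider_pt N k x))"
    using assms by (intro spider_pt_not_nonneg_real) auto
  then have "leg_fun F G (spider_pt N k x) = G (cmod (spider_pt N k x))"
    unfolding leg_fun_def by (rule if_not_P)
  then show ?thesis using False assms by simp
qed

definition leg :: "nat \<Rightarrow> nat \<Rightarrow> complex set" where
  "leg N k = spider_pt N k ` {0..}"

lemma spider_eq_UN_leg: "spider N = (\<Union>k\<in>{..<N}. leg N k)"
  by (auto simp: spider_def leg_def)

lemma closed_leg: "closed (leg N k)"
proof -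
  define c where "c = cis (2 * pi * real k / real N)"
  have "leg N k = (\<lambda>x. x *\<^sub>R c) ` {0..}"
    by (simp add: leg_def spider_pt_def c_def scaleR_conv_of_real)
  also have "closed \<dots>"
    by (rule closed_injective_linear_image[OF closed_atLeast
          bounded_linear.linear[OF bounded_linear_scaleR_left]])
       (simp add: inj_def c_def)
  finally show ?thesis .
qed

lemma leg_fun_on_leg:
  assumes "k < N" "z \<in> leg N k" "F 0 = G 0"
  shows "leg_fun F G z = (if k = 0 then F else G) (cmod z)"
proof -
  obtain x where "x \<ge> 0" "z = spider_pt N k x" using assms(2) by (auto simp: leg_def)
  then show ?thesis using leg_fun_spider_pt[of k N x F G] assms by simp
qed

lemma continuous_on_leg_fun:
  assumes "continuous_on {0..} F" "continuous_on {0..} G" "F 0 = G 0"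
  shows "continuous_on (spider N) (leg_fun F G)"
  unfolding spider_eq_UN_leg
proof (rule continuous_on_closed_Union)
  fix k assume k: "k \<in> {..<N}"
  have "continuous_on (leg N k) (\<lambda>z. (if k = 0 then F else G) (cmod z))"
    by (rule continuous_on_compose2[of "{0..}"]) (use assms in \<open>auto simp: continuous_on_norm_id\<close>)
  moreover have "leg_fun F G z = (if k = 0 then F else G) (cmod z)" if "z \<in> leg N k" for z
    using leg_fun_on_leg[of k N z F G] k that assms(3) by simp
  ultimately show "continuous_on (leg N k) (leg_fun F G)"
    by (simp cong: continuous_on_cong)
qed (auto simp: closed_leg)

lemma bounded_leg_fun:
  assumes "bounded (F ` {0..})" "bounded (G ` {0..})" "F 0 = G 0"
  shows "bounded (leg_fun F G ` spider N)"
proof (rule bounded_subset[OF bounded_Un[THEN iffD2, OF conjI[OF assms(1,2)]]])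
  show "leg_fun F G ` spider N \<subseteq> F ` {0..} \<union> G ` {0..}"
    using assms(3) by (auto simp: spider_def leg_fun_spider_pt)
qed

lemma spider_gen_dom_leg_fun:
  fixes F F' F'' G G' G'' :: "real \<Rightarrow> real"
  assumes N: "N \<ge> 1"
    and dF: "\<And>x. x \<ge> 0 \<Longrightarrow> (F has_real_derivative F' x) (at x within {0..})"
    and dF': "\<And>x. x \<ge> 0 \<Longrightarrow> (F' has_real_derivative F'' x) (at x within {0..})"
    and dG: "\<And>x. x \<ge> 0 \<Longrightarrow> (G has_real_derivative G' x) (at x within {0..})"
    and dG': "\<And>x. x \<ge> 0 \<Longrightarrow> (G' has_real_derivative G'' x) (at x within {0..})"
    and cF'': "continuous_on {0..} F''" and cG'': "continuous_on {0..} G''"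
    and FG0: "F 0 = G 0" and FG0'': "F'' 0 = G'' 0"
    and bF: "bounded (F ` {0..})" and bG: "bounded (G ` {0..})"
    and bF'': "bounded (F'' ` {0..})" and bG'': "bounded (G'' ` {0..})"
    and kirchhoff: "F' 0 + real (N - 1) * G' 0 = 0"
  shows "spider_gen_dom N (leg_fun F G) (leg_fun F'' G'')"
proof -
  define d where "d k = (if k = 0 then F' else G')" for k :: nat
  have "((\<lambda>y. leg_fun F G (spider_pt N k y)) has_real_derivative d k x) (at x within {0..})
      \<and> (d k has_real_derivative leg_fun F'' G'' (spider_pt N k x)) (at x within {0..})"
    if k: "k < N" and x: "0 \<le> x" for k x
  proof (cases "k = 0")
    case True
    show ?thesis
      using has_field_derivative_transform_within[OF dF[OF x] zero_less_one] dF'[OF x] x True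
      by (simp add: d_def leg_fun_of_real)
  next
    case False
    have "((\<lambda>y. leg_fun F G (spider_pt N k y)) has_real_derivative G' x) (at x within {0..})"
      by (rule has_field_derivative_transform_within[OF dG[OF x] zero_less_one])
         (use x False k FG0 in \<open>auto simp: leg_fun_spider_pt\<close>)
    then show ?thesis using dG'[OF x] x False k FG0'' by (simp add: d_def leg_fun_spider_pt)
  qed
  moreover have "(\<Sum>k<N. d k 0) = 0"
  proof -
    obtain N' where N': "N = Suc N'" using N by (cases N) auto
    have "(\<Sum>k<N. d k 0) = d 0 0 + (\<Sum>k<N'. d (Suc k) 0)"
      unfolding N' by (rule sum.lessThan_Suc_shift)
    also have "\<dots> = F' 0 + real N' * G' 0" by (simp add: d_def)
    finally show ?thesis using kirchhoff N' by simp
  qed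
  moreover have cF: "continuous_on {0..} F" and cG: "continuous_on {0..} G"
    by (rule DERIV_continuous_on, use dF dG in auto)+
  ultimately show ?thesis
    unfolding spider_gen_dom_def
    using continuous_on_leg_fun[OF cF cG FG0] continuous_on_leg_fun[OF cF'' cG'' FG0'']
      bounded_leg_fun[OF bF bG FG0] bounded_leg_fun[OF bF'' bG'' FG0''] by blast
qed

section \<open>The test function\<close>

locale spider_hitting =
  fixes N :: nat and lam L :: real
  assumes N_ge_2: "N \<ge> 2" and lam_pos: "lam > 0" and L_pos: "L > 0"
begin

definition "s = sqrt (2 * lam)"
definition "C = 2 / (real N * exp (s * L) - (real N - 2) * exp (- (s * L)))"

text \<open>P and G solve y'' = s^2 y. G is the decaying solution, used on l_2, ..., l_N; P is the
solution on l_1 with P 0 = G 0 and P' 0 + (N - 1) G' 0 = 0, scaled so that P L = 1.\<close>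

definition "P x = C / 2 * (real N * exp (s * x) - (real N - 2) * exp (- (s * x)))"
definition "P' x = C / 2 * s * (real N * exp (s * x) + (real N - 2) * exp (- (s * x)))"
definition "P'' x = s\<^sup>2 * P x"
definition "G x = C * exp (- (s * x))"
definition "G' x = - s * C * exp (- (s * x))"
definition "G'' x = s\<^sup>2 * G x"

text \<open>Beyond x_1 = L on l_1 the test function is never evaluated before the hitting time; E
merely continues P to a bounded C^2 function, matching it to second order at L.\<close>

definition "k2 = (P' L + P'' L) / 2"
definition "k1 = - 2 * P' L - P'' L"
definition "k0 = P L - k1 - k2"
definition "E x = k0 + k1 * exp (L - x) + k2 * exp (2 * (L - x))"
definition "E' x = - k1 * exp (L - x) - 2 * k2 * exp (2 * (L - x))"
definition "E'' x = k1 * exp (L - x) + 4 * k2 * exp (2 * (L - x))"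

definition "F x = (if x \<le> L then P x else E x)"
definition "F' x = (if x \<le> L then P' x else E' x)"
definition "F'' x = (if x \<le> L then P'' x else E'' x)"

definition "f = leg_fun F G"
definition "h = leg_fun F'' G''"

lemma s_pos: "s > 0"
  using lam_pos by (simp add: s_def)

lemma C_denominator_pos: "real N * exp (s * L) - (real N - 2) * exp (- (s * L)) > 0"
proof -
  have "(real N - 2) * exp (- (s * L)) \<le> (real N - 2) * exp (s * L)"
    using s_pos L_pos N_ge_2 by (intro mult_left_mono) auto
  moreover have "(real N - 2) * exp (s * L) < real N * exp (s * L)" by simp
  ultimately show ?thesis by linarith
qed

lemma C_pos: "C > 0"
  using C_denominator_pos by (simp add: C_def)

lemma P_L: "P L = 1"
  using C_denominator_pos by (simp add: P_def C_def)

lemma has_real_derivative_P: "(P has_real_derivative P' x) (at x)"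
  and has_real_derivative_P': "(P' has_real_derivative P'' x) (at x)"
  and has_real_derivative_E: "(E has_real_derivative E' x) (at x)"
  and has_real_derivative_E': "(E' has_real_derivative E'' x) (at x)"
  and has_real_derivative_G: "(G has_real_derivative G' x) (at x)"
  and has_real_derivative_G': "(G' has_real_derivative G'' x) (at x)"
  unfolding P_def P'_def P''_def E_def E'_def E''_def G_def G'_def G''_def
  by (auto intro!: derivative_eq_intros simp: algebra_simps power2_eq_square)

lemma E_L: "E L = P L"
  by (simp add: E_def k0_def)

lemma E'_L: "E' L = P' L"
  by (simp add: E'_def k1_def k2_def field_simps)

lemma E''_L: "E'' L = P'' L"
  unfolding E''_def k1_def k2_def by (simp add: field_simps)

lemma has_real_derivative_F: "(F has_real_derivative F' x) (at x)"
  unfolding F_def[abs_def] F'_def[abs_def]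
  by (rule has_real_derivative_glue[OF has_real_derivative_P has_real_derivative_E E_L[symmetric]
        E'_L[symmetric]])

lemma has_real_derivative_F': "(F' has_real_derivative F'' x) (at x)"
  unfolding F'_def[abs_def] F''_def[abs_def]
  by (rule has_real_derivative_glue[OF has_real_derivative_P' has_real_derivative_E'
        E'_L[symmetric] E''_L[symmetric]])

lemma continuous_on_F'': "continuous_on {0..} F''"
proof -
  have "continuous_on {..L} P''" "continuous_on {L..} E''"
    unfolding P''_def P_def E''_def by (intro continuous_intros)+
  then have "continuous_on ({..L} \<union> {L..}) F''"
    unfolding F''_def[abs_def] by (rule continuous_on_If[rotated 2]) (auto simp: E''_L)
  then show ?thesis by (rule continuous_on_subset) auto
qed

lemma continuous_on_G'': "continuous_on {0..} G''"
  unfolding G''_def G_def by (intro continuous_intros)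

lemma bounded_F: "bounded (F ` {0..})"
  unfolding F_def[abs_def]
proof (rule bounded_if_le_image)
  show "continuous_on {0..L} P" unfolding P_def by (intro continuous_intros)
  fix x assume "L \<le> x"
  then have "exp (L - x) \<le> 1" "exp (2 * (L - x)) \<le> 1" by auto
  then show "\<bar>E x\<bar> \<le> \<bar>k0\<bar> + \<bar>k1\<bar> + \<bar>k2\<bar>" unfolding E_def
    by (auto intro!: order.trans[OF abs_triangle_ineq] add_mono simp: abs_mult mult_left_le)
qed

lemma bounded_F'': "bounded (F'' ` {0..})"
  unfolding F''_def[abs_def]
proof (rule bounded_if_le_image)
  show "continuous_on {0..L} P''" unfolding P''_def P_def by (intro continuous_intros)
  fix x assume "L \<le> x"
  then have "exp (L - x) \<le> 1" "exp (2 * (L - x)) \<le> 1" by auto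
  then show "\<bar>E'' x\<bar> \<le> \<bar>k1\<bar> + 4 * \<bar>k2\<bar>" unfolding E''_def
    by (auto intro!: order.trans[OF abs_triangle_ineq] add_mono simp: abs_mult mult_left_le)
qed

lemma bounded_G: "bounded (G ` {0..})" and bounded_G'': "bounded (G'' ` {0..})"
proof -
  have "\<bar>G x\<bar> \<le> C" "\<bar>G'' x\<bar> \<le> s\<^sup>2 * C" if "x \<ge> 0" for x
    using that C_pos s_pos by (auto simp: G''_def G_def abs_mult)
  then show "bounded (G ` {0..})" "bounded (G'' ` {0..})"
    unfolding bounded_iff by auto
qed

lemma spider_gen_dom_f_h: "spider_gen_dom N f h"
  unfolding f_def h_def
proof (rule spider_gen_dom_leg_fun)
  show "F 0 = G 0" "F'' 0 = G'' 0" "F' 0 + real (N - 1) * G' 0 = 0"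
    using L_pos N_ge_2
    by (simp_all add: F_def F'_def F''_def G_def G'_def G''_def P_def P'_def P''_def
        field_simps)
qed (use N_ge_2 in \<open>auto intro: has_field_derivative_at_within has_real_derivative_F
      has_real_derivative_F' has_real_derivative_G has_real_derivative_G' continuous_on_F''
      continuous_on_G'' bounded_F bounded_F'' bounded_G bounded_G''\<close>)

lemma h_eq_lam_f: "\<not> (Im z = 0 \<and> Re z > L) \<Longrightarrow> h z / 2 = lam * f z"
  using lam_pos by (auto simp: h_def f_def leg_fun_def F''_def F_def P''_def G''_def s_def)

lemma f_target: "f (complex_of_real L) = 1"
  using L_pos by (simp add: f_def leg_fun_of_real F_def P_L)

lemma f_0: "f 0 = C"
  using leg_fun_of_real[of F G 0] L_pos by (simp add: f_def F_def P_def)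

lemma C_sums: "(\<lambda>n. 2 / real N * (1 - 2 / real N) ^ n * exp (- real (2 * n + 1) * sqrt (2 * lam) * L))
  sums C"
proof -
  define x where "x = exp (- (s * L))"
  define q where "q = (1 - 2 / real N) * x\<^sup>2"
  have N: "real N \<ge> 2" using N_ge_2 by simp
  have x: "0 < x" "x < 1" using s_pos L_pos by (auto simp: x_def)
  have "q < 1"
  proof -
    have "q \<le> 1 * x\<^sup>2" unfolding q_def using N by (intro mult_right_mono) auto
    also have "\<dots> < 1" using x by (simp add: power_less_one_iff)
    finally show ?thesis .
  qed
  moreover have "0 \<le> q" using N by (simp add: q_def)
  ultimately have geometric: "(\<lambda>n. 2 / real N * x * q ^ n) sums (2 / real N * x * (1 / (1 - q)))"
    by (intro sums_mult geometric_sums) simp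
  have term_eq: "2 / real N * (1 - 2 / real N) ^ n * exp (- real (2 * n + 1) * sqrt (2 * lam) * L)
      = 2 / real N * x * q ^ n" for n
  proof -
    have "exp (- real (2 * n + 1) * sqrt (2 * lam) * L) = x * (x\<^sup>2) ^ n"
      by (simp add: x_def s_def power2_eq_square exp_of_nat_mult[symmetric] exp_add[symmetric]
          algebra_simps)
    then show ?thesis by (simp add: q_def power_mult_distrib)
  qed
  have limit_eq: "2 / real N * x * (1 / (1 - q)) = C"
  proof -
    define d where "d = real N * exp (s * L) - (real N - 2) * x"
    have "exp (s * L) * x = 1" by (simp add: x_def exp_minus)
    then have key: "real N * (1 - q) = x * d"
      using N by (simp add: d_def q_def power2_eq_square field_simps)
    have "2 / real N * x * (1 / (1 - q)) = 2 * x / (real N * (1 - q))" by simp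
    also have "\<dots> = 2 / d" unfolding key using x by simp
    also have "\<dots> = C" by (simp add: C_def d_def x_def)
    finally show ?thesis .
  qed
  show ?thesis unfolding term_eq limit_eq[symmetric] by (rule geometric)
qed

end

section \<open>Sums over a uniform grid\<close>

definition grid :: "real \<Rightarrow> nat \<Rightarrow> nat \<Rightarrow> real" where
  "grid T n j = T * real j / real n"

lemma grid_Suc_diff: "n \<ge> 1 \<Longrightarrow> grid T n (Suc j) - grid T n j = T / real n"
  by (simp add: grid_def field_simps)

lemma grid_nonneg: "T \<ge> 0 \<Longrightarrow> grid T n j \<ge> 0"
  by (simp add: grid_def)

lemma grid_le: "T \<ge> 0 \<Longrightarrow> j \<le> n \<Longrightarrow> grid T n j \<le> T"
  by (cases "n = 0") (auto simp: grid_def field_simps intro: mult_left_mono)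

lemma grid_less: "T > 0 \<Longrightarrow> j < n \<Longrightarrow> grid T n j < T"
  by (simp add: grid_def field_simps)

lemma grid_mono: "T \<ge> 0 \<Longrightarrow> j \<le> k \<Longrightarrow> grid T n j \<le> grid T n k"
  by (simp add: grid_def divide_right_mono mult_left_mono)

lemma grid_point_near:
  assumes "0 \<le> r" "r \<le> t" "d > 0"
  obtains k j where "j \<le> k" "\<bar>grid t k j - r\<bar> < d"
proof -
  define k where "k = nat \<lceil>t / d\<rceil> + 1"
  have k: "real k \<ge> 1" "t / real k < d"
  proof -
    show "real k \<ge> 1" by (simp add: k_def)
    have "t / d < real k" unfolding k_def by linarith
    then show "t / real k < d" using assms(3) \<open>real k \<ge> 1\<close> by (simp add: field_simps)
  qed
  show ?thesis
  proof (cases "t = 0")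
    case True
    then show ?thesis using assms by (intro that[of 0 k]) (auto simp: grid_def)
  next
    case False
    then have t: "t > 0" using assms by simp
    define j where "j = nat \<lfloor>r * real k / t\<rfloor>"
    have j: "real j \<le> r * real k / t" "r * real k / t < real j + 1"
      using assms t by (auto simp: j_def)
    have "j \<le> k"
    proof -
      have "r * real k / t \<le> real k" using assms t by (simp add: field_simps mult_right_mono)
      then show ?thesis using j(1) by linarith
    qed
    moreover have "grid t k j \<le> r" "r < grid t k j + t / real k"
      using j t k(1) by (simp_all add: grid_def field_simps)
    ultimately show ?thesis using k(2) by (intro that[of j k]) auto
  qed
qed

lemma continuous_on_hits_iff_grid:
  fixes g :: "real \<Rightarrow> 'a::metric_space"
  assumes g: "continuous_on {0..t} g" and t: "0 \<le> t"
  shows "(\<exists>r\<in>{0..t}. g r = z) \<longleftrightarrow>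
    (\<forall>m::nat. \<exists>k j. j \<le> k \<and> dist (g (grid t k j)) z < inverse (real (Suc m)))"
proof
  assume "\<exists>r\<in>{0..t}. g r = z"
  then obtain r where r: "r \<in> {0..t}" "g r = z" by blast
  show "\<forall>m::nat. \<exists>k j. j \<le> k \<and> dist (g (grid t k j)) z < inverse (real (Suc m))"
  proof
    fix m :: nat
    have "inverse (real (Suc m)) > 0" by simp
    then obtain d where "d > 0"
      and d: "\<forall>x\<in>{0..t}. dist x r < d \<longrightarrow> dist (g x) (g r) < inverse (real (Suc m))"
      using g r(1) unfolding continuous_on_iff by blast
    have "0 \<le> r" "r \<le> t" using r(1) by auto
    then obtain k j where "j \<le> k" "\<bar>grid t k j - r\<bar> < d"
      using \<open>d > 0\<close> by (rule grid_point_near)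
    moreover have "grid t k j \<in> {0..t}" using \<open>j \<le> k\<close> t by (simp add: grid_nonneg grid_le)
    ultimately have "dist (g (grid t k j)) z < inverse (real (Suc m))"
      using d r(2) by (simp add: dist_real_def)
    then show "\<exists>k j. j \<le> k \<and> dist (g (grid t k j)) z < inverse (real (Suc m))"
      using \<open>j \<le> k\<close> by blast
  qed
next
  assume near: "\<forall>m::nat. \<exists>k j. j \<le> k \<and> dist (g (grid t k j)) z < inverse (real (Suc m))"
  obtain r where r: "r \<in> {0..t}" and rmin: "\<And>y. y \<in> {0..t} \<Longrightarrow> dist (g r) z \<le> dist (g y) z"
    using continuous_attains_inf[OF compact_Icc _ continuous_on_dist[OF g continuous_on_const[of _ z]]] t
    by auto
  have small: "dist (g r) z < inverse (real (Suc m))" for m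
  proof -
    obtain k j where "j \<le> k" "dist (g (grid t k j)) z < inverse (real (Suc m))" using near by blast
    moreover have "grid t k j \<in> {0..t}" using \<open>j \<le> k\<close> t by (simp add: grid_nonneg grid_le)
    ultimately show ?thesis using rmin by fastforce
  qed
  have "dist (g r) z = 0"
  proof (rule ccontr)
    assume "dist (g r) z \<noteq> 0"
    then obtain m where "inverse (real (Suc m)) < dist (g r) z"
      using reals_Archimedean[of "dist (g r) z"] by auto
    with small[of m] show False by simp
  qed
  then show "\<exists>r\<in>{0..t}. g r = z" using r by auto
qed

definition grid_telescope :: "real \<Rightarrow> real \<Rightarrow> (real \<Rightarrow> real) \<Rightarrow> nat \<Rightarrow> real" where
  "grid_telescope T \<sigma> Z n =
     (\<Sum>j<n. if grid T n j < \<sigma> then Z (grid T n (Suc j)) - Z (grid T n j) else 0)"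

lemma grid_telescope_eq:
  assumes T: "T > 0" and n: "n \<ge> 1" and \<sigma>: "0 \<le> \<sigma>" "\<sigma> \<le> T"
  obtains u where "\<sigma> \<le> u" "u \<le> T" "u \<le> \<sigma> + T / real n" "grid_telescope T \<sigma> Z n = Z u - Z 0"
proof -
  define m where "m = nat \<lceil>\<sigma> * real n / T\<rceil>"
  have m: "\<sigma> * real n / T \<le> real m" "real m < \<sigma> * real n / T + 1"
    using \<sigma> T by (auto simp: m_def) linarith
  have "m \<le> n"
  proof -
    have "\<sigma> * real n / T \<le> real n" using \<sigma> T by (simp add: field_simps mult_right_mono)
    then show ?thesis unfolding m_def by (simp add: ceiling_le_iff nat_le_iff)
  qed
  have below_iff: "grid T n j < \<sigma> \<longleftrightarrow> j < m" for j
  proof -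
    have "grid T n j < \<sigma> \<longleftrightarrow> real j < \<sigma> * real n / T"
      using T n by (simp add: grid_def field_simps)
    also have "\<dots> \<longleftrightarrow> j < m" by (simp add: m_def less_ceiling_iff zless_nat_eq_int_zless)
    finally show ?thesis .
  qed
  have "grid_telescope T \<sigma> Z n = (\<Sum>j\<in>{j\<in>{..<n}. j < m}. Z (grid T n (Suc j)) - Z (grid T n j))"
    unfolding grid_telescope_def below_iff by (rule sum.inter_filter[symmetric]) simp
  also have "{j\<in>{..<n}. j < m} = {..<m}" using \<open>m \<le> n\<close> by auto
  also have "(\<Sum>j<m. Z (grid T n (Suc j)) - Z (grid T n j)) = Z (grid T n m) - Z (grid T n 0)"
    by (rule sum_lessThan_telescope)
  also have "grid T n 0 = 0" by (simp add: grid_def)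
  finally have "grid_telescope T \<sigma> Z n = Z (grid T n m) - Z 0" .
  moreover have "\<sigma> \<le> grid T n m" "grid T n m \<le> \<sigma> + T / real n"
    using m T n by (simp_all add: grid_def field_simps)
  moreover have "grid T n m \<le> T" using grid_le[OF _ \<open>m \<le> n\<close>] T by simp
  ultimately show ?thesis by (intro that) auto
qed

lemma grid_telescope_bound:
  assumes T: "T > 0" and \<sigma>: "0 \<le> \<sigma>" "\<sigma> \<le> T" and Z: "\<And>u. u \<in> {0..T} \<Longrightarrow> \<bar>Z u\<bar> \<le> B"
  shows "\<bar>grid_telescope T \<sigma> Z n\<bar> \<le> 2 * B"
proof (cases "n = 0")
  case True
  then show ?thesis using Z[of 0] T by (simp add: grid_telescope_def)
next
  case False
  then have "n \<ge> 1" by simp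
  then obtain u where "\<sigma> \<le> u" "u \<le> T" "grid_telescope T \<sigma> Z n = Z u - Z 0"
    by (rule grid_telescope_eq[OF T _ \<sigma>])
  moreover have "\<bar>Z u\<bar> \<le> B" "\<bar>Z 0\<bar> \<le> B" using Z \<sigma> \<open>u \<le> T\<close> \<open>\<sigma> \<le> u\<close> T by auto
  ultimately show ?thesis using abs_triangle_ineq4[of "Z u" "Z 0"] by simp
qed

lemma grid_telescope_tendsto:
  assumes T: "T > 0" and \<sigma>: "0 \<le> \<sigma>" "\<sigma> \<le> T" and Z: "continuous_on {0..T} Z"
  shows "(\<lambda>n. grid_telescope T \<sigma> Z n) \<longlonglongrightarrow> Z \<sigma> - Z 0"
proof -
  define u where "u n = (SOME u. \<sigma> \<le> u \<and> u \<le> T \<and> u \<le> \<sigma> + T / real n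
    \<and> grid_telescope T \<sigma> Z n = Z u - Z 0)" for n
  have u: "\<sigma> \<le> u n \<and> u n \<le> T \<and> u n \<le> \<sigma> + T / real n \<and> grid_telescope T \<sigma> Z n = Z (u n) - Z 0"
    if n: "n \<ge> 1" for n
  proof -
    obtain v where "\<sigma> \<le> v" "v \<le> T" "v \<le> \<sigma> + T / real n" "grid_telescope T \<sigma> Z n = Z v - Z 0"
      using grid_telescope_eq[OF T n \<sigma>] .
    then have "\<exists>v. \<sigma> \<le> v \<and> v \<le> T \<and> v \<le> \<sigma> + T / real n \<and> grid_telescope T \<sigma> Z n = Z v - Z 0"
      by blast
    then show ?thesis unfolding u_def by (rule someI_ex)
  qed
  have ev: "\<forall>\<^sub>F n in sequentially. n \<ge> 1" by (rule eventually_ge_at_top)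
  have "u \<longlonglongrightarrow> \<sigma>"
  proof (rule tendsto_sandwich[of "\<lambda>n. \<sigma>" _ _ "\<lambda>n. \<sigma> + T / real n"])
    show "\<forall>\<^sub>F n in sequentially. \<sigma> \<le> u n" using ev by eventually_elim (use u in auto)
    show "\<forall>\<^sub>F n in sequentially. u n \<le> \<sigma> + T / real n" using ev by eventually_elim (use u in auto)
    show "(\<lambda>n. \<sigma> + T / real n) \<longlonglongrightarrow> \<sigma>"
      using tendsto_add[OF tendsto_const lim_const_over_n[of T]] by simp
  qed simp
  moreover have "\<forall>\<^sub>F n in sequentially. u n \<in> {0..T}"
    using ev by eventually_elim (use u \<sigma> in force)
  ultimately have "(\<lambda>n. Z (u n)) \<longlonglongrightarrow> Z \<sigma>"
    using \<sigma> by (intro continuous_on_tendsto_compose[OF Z]) auto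
  then have "(\<lambda>n. Z (u n) - Z 0) \<longlonglongrightarrow> Z \<sigma> - Z 0" by (intro tendsto_diff) auto
  moreover have "\<forall>\<^sub>F n in sequentially. Z (u n) - Z 0 = grid_telescope T \<sigma> Z n"
    using ev by eventually_elim (use u in auto)
  ultimately show ?thesis by (rule Lim_transform_eventually)
qed

text \<open>If X t = p t - int_0^t q, then
  e^(-lam c) (X c - X a) = e^(-lam c) p c - e^(-lam a) p a - ibp_error lam p q a c.\<close>

definition ibp_error :: "real \<Rightarrow> (real \<Rightarrow> real) \<Rightarrow> (real \<Rightarrow> real) \<Rightarrow> real \<Rightarrow> real \<Rightarrow> real" where
  "ibp_error lam p q a c = exp (- lam * c) * (integral {0..c} q - integral {0..a} q)
      + (exp (- lam * c) - exp (- lam * a)) * p a"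

lemma ibp_error_bound:
  fixes p q :: "real \<Rightarrow> real"
  assumes "0 \<le> a" "a \<le> c" "c \<le> T" "lam > 0"
    and cq: "continuous_on {0..T} q"
    and bp: "\<And>u. u \<in> {0..T} \<Longrightarrow> \<bar>p u\<bar> \<le> Fb" and bq: "\<And>u. u \<in> {0..T} \<Longrightarrow> \<bar>q u\<bar> \<le> Qb"
  shows "\<bar>ibp_error lam p q a c\<bar> \<le> (c - a) * (Qb + lam * Fb)"
proof -
  have "q integrable_on {0..c}"
    by (rule integrable_continuous_real, rule continuous_on_subset[OF cq]) (use assms in auto)
  from Henstock_Kurzweil_Integration.integral_combine[OF assms(1,2) this]
  have I: "integral {0..c} q - integral {0..a} q = integral {a..c} q" by simp
  have "continuous_on {a..c} q" by (rule continuous_on_subset[OF cq]) (use assms in auto)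
  then have "\<bar>integral {a..c} q\<bar> \<le> Qb * (c - a)"
    using integral_bound[of a c q Qb] assms by auto
  then have t1: "\<bar>exp (- lam * c) * integral {a..c} q\<bar> \<le> 1 * (Qb * (c - a))"
    unfolding abs_mult using assms by (intro mult_mono) auto
  have "exp (- lam * a) - exp (- lam * c) = exp (- lam * a) * (1 - exp (- (lam * (c - a))))"
    by (simp add: algebra_simps exp_add[symmetric])
  also have "\<dots> \<le> 1 * (lam * (c - a))"
    using assms exp_ge_add_one_self[of "- (lam * (c - a))"] by (intro mult_mono) auto
  finally have "\<bar>exp (- lam * c) - exp (- lam * a)\<bar> \<le> lam * (c - a)"
    using assms by auto
  then have t2: "\<bar>(exp (- lam * c) - exp (- lam * a)) * p a\<bar> \<le> (lam * (c - a)) * Fb"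
    unfolding abs_mult using bp[of a] assms by (intro mult_mono) auto
  have "\<bar>ibp_error lam p q a c\<bar> \<le> 1 * (Qb * (c - a)) + (lam * (c - a)) * Fb"
    unfolding ibp_error_def I by (rule order.trans[OF abs_triangle_ineq add_mono[OF t1 t2]])
  then show ?thesis by (simp add: algebra_simps)
qed

text \<open>Where q = lam p the first-order terms of the two parts of ibp_error cancel.\<close>

lemma ibp_error_bound_eigen:
  fixes p q :: "real \<Rightarrow> real"
  assumes "0 \<le> a" "a \<le> c" "c \<le> T" "lam > 0" "lam * (c - a) \<le> 1"
    and cp: "continuous_on {0..T} p" and cq: "continuous_on {0..T} q"
    and eigen: "\<And>u. u \<in> {a..c} \<Longrightarrow> q u = lam * p u"
    and bp: "\<And>u. u \<in> {0..T} \<Longrightarrow> \<bar>p u\<bar> \<le> Fb"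
    and osc: "\<And>u. u \<in> {a..c} \<Longrightarrow> \<bar>p u - p a\<bar> \<le> e"
  shows "\<bar>ibp_error lam p q a c\<bar> \<le> lam * (c - a) * e + Fb * (lam * (c - a))\<^sup>2"
proof -
  have cpc: "continuous_on {a..c} p" by (rule continuous_on_subset[OF cp]) (use assms in auto)
  have "q integrable_on {0..c}"
    by (rule integrable_continuous_real, rule continuous_on_subset[OF cq]) (use assms in auto)
  from Henstock_Kurzweil_Integration.integral_combine[OF assms(1,2) this]
  have I: "integral {0..c} q - integral {0..a} q = integral {a..c} q" by simp
  have "integral {a..c} q = integral {a..c} (\<lambda>u. lam * p u)"
    by (rule integral_cong) (rule eigen)
  also have "\<dots> = lam * integral {a..c} p" by simp
  also have "integral {a..c} p = integral {a..c} (\<lambda>u. p u - p a) + (c - a) * p a"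
    using integral_diff[OF integrable_continuous_real[OF cpc] integrable_const_ivl[of "p a" a c]]
      assms by (simp add: content_real)
  finally have I2: "integral {a..c} q = lam * (integral {a..c} (\<lambda>u. p u - p a) + (c - a) * p a)" .
  have "continuous_on {a..c} (\<lambda>u. p u - p a)" using cpc by (intro continuous_intros)
  then have Ib: "\<bar>integral {a..c} (\<lambda>u. p u - p a)\<bar> \<le> e * (c - a)"
    using integral_bound[of a c "\<lambda>u. p u - p a" e] assms by auto
  define x where "x = lam * (c - a)"
  have x: "0 \<le> x" "x \<le> 1" using assms by (auto simp: x_def)
  have ex: "0 \<le> exp x - 1 - x" "exp x - 1 - x \<le> x\<^sup>2"
    using exp_ge_add_one_self[of x] exp_bound[OF x] by linarith+
  have "exp (- lam * a) = exp (- lam * c) * exp x"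
    by (simp add: x_def exp_add[symmetric] algebra_simps)
  then have eq: "ibp_error lam p q a c = exp (- lam * c) * lam * integral {a..c} (\<lambda>u. p u - p a)
      - exp (- lam * c) * (exp x - 1 - x) * p a"
    unfolding ibp_error_def I I2 x_def by algebra
  have e1: "exp (- lam * c) \<le> 1" using assms by auto
  have t1: "\<bar>exp (- lam * c) * lam * integral {a..c} (\<lambda>u. p u - p a)\<bar> \<le> 1 * lam * (e * (c - a))"
    unfolding abs_mult using e1 Ib assms by (intro mult_mono) auto
  have t2: "\<bar>exp (- lam * c) * (exp x - 1 - x) * p a\<bar> \<le> 1 * x\<^sup>2 * Fb"
    unfolding abs_mult using e1 ex bp[of a] assms by (intro mult_mono) auto
  have "\<bar>ibp_error lam p q a c\<bar> \<le> 1 * lam * (e * (c - a)) + 1 * x\<^sup>2 * Fb"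
    unfolding eq by (rule order.trans[OF abs_triangle_ineq4 add_mono[OF t1 t2]])
  then show ?thesis by (simp add: x_def algebra_simps)
qed

definition ibp_error_sum ::
    "real \<Rightarrow> real \<Rightarrow> real \<Rightarrow> (real \<Rightarrow> real) \<Rightarrow> (real \<Rightarrow> real) \<Rightarrow> nat \<Rightarrow> real" where
  "ibp_error_sum T lam \<sigma> p q n =
     (\<Sum>j<n. if grid T n j < \<sigma> then ibp_error lam p q (grid T n j) (grid T n (Suc j)) else 0)"

lemma ibp_error_sum_bound:
  fixes p q :: "real \<Rightarrow> real"
  assumes T: "T > 0" and lam: "lam > 0" and cq: "continuous_on {0..T} q"
    and bp: "\<And>u. u \<in> {0..T} \<Longrightarrow> \<bar>p u\<bar> \<le> Fb" and bq: "\<And>u. u \<in> {0..T} \<Longrightarrow> \<bar>q u\<bar> \<le> Qb"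
  shows "\<bar>ibp_error_sum T lam \<sigma> p q n\<bar> \<le> T * (Qb + lam * Fb)"
proof (cases "n = 0")
  case True
  have "0 \<le> Fb" "0 \<le> Qb" using bp[of 0] bq[of 0] T by auto
  then show ?thesis using True T lam by (simp add: ibp_error_sum_def)
next
  case False
  then have n: "n \<ge> 1" by simp
  have "0 \<le> Fb" "0 \<le> Qb" using bp[of 0] bq[of 0] T by auto
  then have "\<bar>if grid T n j < \<sigma> then ibp_error lam p q (grid T n j) (grid T n (Suc j)) else 0\<bar>
      \<le> T / real n * (Qb + lam * Fb)" if "j < n" for j
  proof -
    have "\<bar>ibp_error lam p q (grid T n j) (grid T n (Suc j))\<bar>
        \<le> (grid T n (Suc j) - grid T n j) * (Qb + lam * Fb)"
      by (rule ibp_error_bound[OF _ _ _ lam cq bp bq])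
         (use T that in \<open>auto intro: grid_nonneg grid_mono grid_le\<close>)
    then show ?thesis using grid_Suc_diff[OF n] T lam that by auto
  qed
  then have "\<bar>ibp_error_sum T lam \<sigma> p q n\<bar> \<le> (\<Sum>j<n. T / real n * (Qb + lam * Fb))"
    unfolding ibp_error_sum_def by (intro order.trans[OF sum_abs sum_mono]) auto
  also have "\<dots> = T * (Qb + lam * Fb)" using n by simp
  finally show ?thesis .
qed

lemma card_grid_straddle_le_1:
  assumes "T > 0" "n \<ge> 1"
  shows "card {j \<in> {..<n}. grid T n j < \<sigma> \<and> \<sigma> < grid T n (Suc j)} \<le> 1"
proof -
  have "{j \<in> {..<n}. grid T n j < \<sigma> \<and> \<sigma> < grid T n (Suc j)} \<subseteq> {nat \<lfloor>\<sigma> * real n / T\<rfloor>}"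
  proof
    fix j assume "j \<in> {j \<in> {..<n}. grid T n j < \<sigma> \<and> \<sigma> < grid T n (Suc j)}"
    then have "real j < \<sigma> * real n / T" "\<sigma> * real n / T < real j + 1"
      using assms by (auto simp: grid_def field_simps)
    then have "\<lfloor>\<sigma> * real n / T\<rfloor> = int j" by (intro floor_unique) auto
    then show "j \<in> {nat \<lfloor>\<sigma> * real n / T\<rfloor>}" by simp
  qed
  from card_mono[OF _ this] show ?thesis by simp
qed

text \<open>Only the grid cell containing sigma (if any) is not covered by the eigenfunction
estimate; it contributes O(T / n).\<close>

lemma ibp_error_sum_bound_eigen:
  fixes p q :: "real \<Rightarrow> real"
  assumes T: "T > 0" and lam: "lam > 0" and n: "n \<ge> 1" and small: "lam * (T / real n) \<le> 1"
    and cp: "continuous_on {0..T} p" and cq: "continuous_on {0..T} q"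
    and eigen: "\<And>u. u \<in> {0..\<sigma>} \<Longrightarrow> q u = lam * p u"
    and bp: "\<And>u. u \<in> {0..T} \<Longrightarrow> \<bar>p u\<bar> \<le> Fb" and bq: "\<And>u. u \<in> {0..T} \<Longrightarrow> \<bar>q u\<bar> \<le> Qb"
    and osc: "\<And>u a. u \<in> {0..T} \<Longrightarrow> a \<in> {0..T} \<Longrightarrow> \<bar>u - a\<bar> \<le> T / real n \<Longrightarrow> \<bar>p u - p a\<bar> \<le> e"
  shows "\<bar>ibp_error_sum T lam \<sigma> p q n\<bar>
    \<le> T * lam * e + (Fb * lam\<^sup>2 * T + Qb + lam * Fb) * (T / real n)"
proof -
  define dt where "dt = T / real n"
  define A where "A = lam * dt * e + Fb * (lam * dt)\<^sup>2"
  define B where "B = dt * (Qb + lam * Fb)"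
  define straddle where "straddle j \<longleftrightarrow> grid T n j < \<sigma> \<and> \<sigma> < grid T n (Suc j)" for j
  have "0 \<le> Fb" "0 \<le> Qb" "0 \<le> e" "0 < dt"
    using bp[of 0] bq[of 0] osc[of 0 0] T n by (auto simp: dt_def)
  then have A0: "A \<ge> 0" and B0: "B \<ge> 0" using lam by (auto simp: A_def B_def)
  have cell_bound: "\<bar>if grid T n j < \<sigma> then ibp_error lam p q (grid T n j) (grid T n (Suc j)) else 0\<bar>
      \<le> A + (if straddle j then B else 0)" if "j < n" for j
  proof -
    define a where "a = grid T n j"
    define c where "c = grid T n (Suc j)"
    have ca: "c - a = dt" using grid_Suc_diff[OF n] by (simp add: a_def c_def dt_def)
    have a0: "0 \<le> a" and ac: "a \<le> c" and cT: "c \<le> T"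
      using grid_nonneg[of T] grid_mono[of T] grid_le[of T] T that by (auto simp: a_def c_def)
    consider "\<not> a < \<sigma>" | "a < \<sigma>" "c \<le> \<sigma>" | "a < \<sigma>" "\<sigma> < c" by linarith
    then show ?thesis
    proof cases
      case 1
      then show ?thesis using A0 B0 by (simp add: a_def)
    next
      case 2
      have "\<bar>ibp_error lam p q a c\<bar> \<le> A"
        unfolding A_def ca[symmetric]
      proof (rule ibp_error_bound_eigen[OF a0 ac cT lam _ cp cq _ bp])
        show "lam * (c - a) \<le> 1" using ca small by (simp add: dt_def)
        show "q u = lam * p u" if "u \<in> {a..c}" for u using that 2 a0 by (intro eigen) auto
        show "\<bar>p u - p a\<bar> \<le> e" if "u \<in> {a..c}" for u
          using that a0 cT ca by (intro osc) (auto simp: dt_def)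
      qed
      then show ?thesis using 2 B0 by (simp add: a_def c_def)
    next
      case 3
      have "\<bar>ibp_error lam p q a c\<bar> \<le> B"
        using ibp_error_bound[OF a0 ac cT lam cq bp bq] ca by (simp add: B_def)
      then show ?thesis using 3 A0 by (simp add: a_def c_def straddle_def)
    qed
  qed
  have "\<bar>ibp_error_sum T lam \<sigma> p q n\<bar> \<le> (\<Sum>j<n. A + (if straddle j then B else 0))"
    unfolding ibp_error_sum_def by (rule order.trans[OF sum_abs sum_mono]) (use cell_bound in auto)
  also have "\<dots> = real n * A + real (card {j \<in> {..<n}. straddle j}) * B"
    by (simp add: sum.distrib sum.inter_filter[symmetric])
  also have "\<dots> \<le> real n * A + 1 * B"
    using card_grid_straddle_le_1[OF T n] B0 unfolding straddle_def
    by (intro add_left_mono mult_right_mono) auto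
  also have "\<dots> = T * lam * e + (Fb * lam\<^sup>2 * T + Qb + lam * Fb) * (T / real n)"
    using n by (simp add: A_def B_def dt_def power2_eq_square field_simps)
  finally show ?thesis .
qed

lemma ibp_error_sum_tendsto_0:
  fixes p q :: "real \<Rightarrow> real"
  assumes T: "T > 0" and lam: "lam > 0"
    and cp: "continuous_on {0..T} p" and cq: "continuous_on {0..T} q"
    and eigen: "\<And>u. u \<in> {0..\<sigma>} \<Longrightarrow> q u = lam * p u"
    and bp: "\<And>u. u \<in> {0..T} \<Longrightarrow> \<bar>p u\<bar> \<le> Fb" and bq: "\<And>u. u \<in> {0..T} \<Longrightarrow> \<bar>q u\<bar> \<le> Qb"
  shows "(\<lambda>n. ibp_error_sum T lam \<sigma> p q n) \<longlonglongrightarrow> 0"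
proof (rule LIMSEQ_I)
  fix \<epsilon> :: real assume "\<epsilon> > 0"
  define K where "K = Fb * lam\<^sup>2 * T + Qb + lam * Fb"
  define e where "e = \<epsilon> / (2 * (T * lam + 1))"
  have "0 < T * lam" using T lam by simp
  then have "e > 0" unfolding e_def using \<open>\<epsilon> > 0\<close> by (intro divide_pos_pos) auto
  have "T * lam * e = \<epsilon> / 2 * (T * lam / (T * lam + 1))" by (simp add: e_def)
  also have "\<dots> < \<epsilon> / 2 * 1"
    using \<open>0 < T * lam\<close> \<open>\<epsilon> > 0\<close> by (intro mult_strict_left_mono) auto
  finally have Te: "T * lam * e < \<epsilon> / 2" by simp
  obtain d where "d > 0"
    and d: "\<And>u a. u \<in> {0..T} \<Longrightarrow> a \<in> {0..T} \<Longrightarrow> dist u a < d \<Longrightarrow> dist (p u) (p a) < e"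
    using compact_uniformly_continuous[OF cp compact_Icc] \<open>e > 0\<close>
    unfolding uniformly_continuous_on_def by metis
  have dt: "(\<lambda>n. T / real n) \<longlonglongrightarrow> 0" by (rule lim_const_over_n)
  have "\<forall>\<^sub>F n in sequentially. n \<ge> 1 \<and> T / real n < d \<and> lam * (T / real n) < 1
      \<and> K * (T / real n) < \<epsilon> / 2"
    using \<open>d > 0\<close> \<open>\<epsilon> > 0\<close>
    by (intro eventually_conj eventually_ge_at_top order_tendstoD(2)[OF dt]
        order_tendstoD(2)[OF tendsto_mult_right_zero[OF dt]]) auto
  then obtain n0 where n0: "\<And>n. n \<ge> n0 \<Longrightarrow> n \<ge> 1 \<and> T / real n < d \<and> lam * (T / real n) < 1
      \<and> K * (T / real n) < \<epsilon> / 2"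
    unfolding eventually_sequentially by blast
  have "\<bar>ibp_error_sum T lam \<sigma> p q n\<bar> < \<epsilon>" if "n \<ge> n0" for n
  proof -
    have "\<bar>p u - p a\<bar> \<le> e" if "u \<in> {0..T}" "a \<in> {0..T}" "\<bar>u - a\<bar> \<le> T / real n" for u a
      using d[of u a] that n0[OF \<open>n \<ge> n0\<close>] by (simp add: dist_real_def)
    then have "\<bar>ibp_error_sum T lam \<sigma> p q n\<bar> \<le> T * lam * e + K * (T / real n)"
      unfolding K_def using n0[OF that]
      by (intro ibp_error_sum_bound_eigen[OF T lam _ _ cp cq eigen bp bq]) auto
    then show ?thesis using Te n0[OF that] by linarith
  qed
  then show "\<exists>n0. \<forall>n\<ge>n0. norm (ibp_error_sum T lam \<sigma> p q n - 0) < \<epsilon>" by auto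
qed

section \<open>Hitting the target point\<close>

locale spider_BM_hitting = spider_hitting +
  fixes M :: "'a measure" and b :: "real \<Rightarrow> 'a \<Rightarrow> complex"
  assumes spider_BM: "spider_BM N M b"
begin

lemma prob_space_M: "prob_space M"
  and measurable_b [measurable]: "b t \<in> borel_measurable M"
  and b_0: "\<omega> \<in> space M \<Longrightarrow> b 0 \<omega> = 0"
  and continuous_on_b: "\<omega> \<in> space M \<Longrightarrow> continuous_on {0..} (\<lambda>t. b t \<omega>)"
  and b_in_spider: "\<omega> \<in> space M \<Longrightarrow> t \<ge> 0 \<Longrightarrow> b t \<omega> \<in> spider N"
  using spider_BM by (simp_all add: spider_BM_def)

definition "f_bound = (SOME B. \<forall>z\<in>spider N. \<bar>f z\<bar> \<le> B)"
definition "h_bound = (SOME B. \<forall>z\<in>spider N. \<bar>h z\<bar> \<le> B)"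

lemma continuous_on_f: "continuous_on (spider N) f"
  and continuous_on_h: "continuous_on (spider N) h"
  and abs_f_le: "z \<in> spider N \<Longrightarrow> \<bar>f z\<bar> \<le> f_bound"
  and abs_h_le: "z \<in> spider N \<Longrightarrow> \<bar>h z\<bar> \<le> h_bound"
  using spider_gen_dom_f_h abs_le_SOME_bound[of f "spider N" z] abs_le_SOME_bound[of h "spider N" z]
  by (simp_all add: spider_gen_dom_def f_bound_def h_bound_def)

definition "X t \<omega> = f (b t \<omega>) - f (b 0 \<omega>) - integral {0..t} (\<lambda>u. h (b u \<omega>) / 2)"

lemma is_martingale_X: "is_martingale M (nat_filt M b) X"
  using spider_BM spider_gen_dom_f_h unfolding spider_BM_def X_def[abs_def] by blast

abbreviation "target \<equiv> complex_of_real L"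

definition "hits \<omega> \<longleftrightarrow> (\<exists>t\<ge>0. b t \<omega> = target)"
definition "tau \<omega> = Inf {t. 0 \<le> t \<and> b t \<omega> = target}"

lemma
  assumes \<omega>: "\<omega> \<in> space M" and "hits \<omega>"
  shows tau_pos: "0 < tau \<omega>" and b_tau: "b (tau \<omega>) \<omega> = target"
    and b_before_tau: "\<And>r. 0 \<le> r \<Longrightarrow> r < tau \<omega> \<Longrightarrow> b r \<omega> \<noteq> target"
proof -
  define S where "S = {t. 0 \<le> t \<and> b t \<omega> = target}"
  have "S = {0..} \<inter> (\<lambda>t. b t \<omega>) -` {target}" by (auto simp: S_def)
  then have "closed S" using continuous_closed_preimage[OF continuous_on_b[OF \<omega>]] by auto
  moreover have "S \<noteq> {}" using \<open>hits \<omega>\<close> by (auto simp: hits_def S_def)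
  moreover have bdd: "bdd_below S" by (rule bdd_belowI[of _ 0]) (auto simp: S_def)
  ultimately have "tau \<omega> \<in> S" unfolding tau_def S_def[symmetric] by (intro closed_contains_Inf)
  then show b_tau: "b (tau \<omega>) \<omega> = target" by (simp add: S_def)
  have "tau \<omega> \<noteq> 0" using b_tau b_0[OF \<omega>] L_pos by auto
  then show "0 < tau \<omega>" using \<open>tau \<omega> \<in> S\<close> by (auto simp: S_def)
  show "b r \<omega> \<noteq> target" if "0 \<le> r" "r < tau \<omega>" for r
  proof
    assume "b r \<omega> = target"
    then have "tau \<omega> \<le> r" unfolding tau_def S_def[symmetric] using that bdd
      by (intro cInf_lower) (auto simp: S_def)
    then show False using that by simp
  qed
qed

text \<open>The l_1-coordinate (zero on the other legs) is continuous along paths, so a path has to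
pass through the target before it can get beyond it.\<close>

lemma b_not_beyond_target:
  assumes \<omega>: "\<omega> \<in> space M" and u: "0 \<le> u" and unhit: "\<And>r. 0 \<le> r \<Longrightarrow> r < u \<Longrightarrow> b r \<omega> \<noteq> target"
  shows "\<not> (Im (b u \<omega>) = 0 \<and> Re (b u \<omega>) > L)"
proof
  assume beyond: "Im (b u \<omega>) = 0 \<and> Re (b u \<omega>) > L"
  define \<phi> where "\<phi> = leg_fun (\<lambda>x. x) (\<lambda>_. 0)"
  have "continuous_on (spider N) \<phi>"
    unfolding \<phi>_def by (rule continuous_on_leg_fun) simp_all
  then have "continuous_on {0..u} (\<lambda>r. \<phi> (b r \<omega>))"
    by (rule continuous_on_compose2[OF _ continuous_on_subset[OF continuous_on_b[OF \<omega>]]])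
       (use b_in_spider[OF \<omega>] in auto)
  moreover have "\<phi> (b 0 \<omega>) \<le> L" "L \<le> \<phi> (b u \<omega>)"
    using b_0[OF \<omega>] beyond L_pos by (simp_all add: \<phi>_def leg_fun_def)
  ultimately obtain r where r: "0 \<le> r" "r \<le> u" "\<phi> (b r \<omega>) = L"
    using IVT'[of "\<lambda>r. \<phi> (b r \<omega>)" 0 L u] u by auto
  then have "Im (b r \<omega>) = 0" "Re (b r \<omega>) = L"
    using L_pos by (auto simp: \<phi>_def leg_fun_def split: if_splits)
  then have "b r \<omega> = target" by (simp add: complex_eq_iff)
  moreover have "r \<noteq> u" using \<open>Re (b r \<omega>) = L\<close> beyond by auto
  ultimately show False using unhit[of r] r by simp
qed

definition "stop T \<omega> = (if hits \<omega> then min (tau \<omega>) T else T)"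

definition "unhit t = {\<omega> \<in> space M. \<forall>r\<in>{0..t}. b r \<omega> \<noteq> target}"

lemma stop_bounds: "\<omega> \<in> space M \<Longrightarrow> T > 0 \<Longrightarrow> 0 \<le> stop T \<omega> \<and> stop T \<omega> \<le> T"
  using tau_pos[of \<omega>] by (auto simp: stop_def)

lemma b_before_stop: "\<omega> \<in> space M \<Longrightarrow> 0 \<le> r \<Longrightarrow> r < stop T \<omega> \<Longrightarrow> b r \<omega> \<noteq> target"
  using b_before_tau[of \<omega> r] by (auto simp: stop_def hits_def split: if_splits)

lemma unhit_iff_before_stop:
  assumes \<omega>: "\<omega> \<in> space M" and t: "0 \<le> t" "t < T"
  shows "\<omega> \<in> unhit t \<longleftrightarrow> t < stop T \<omega>"
proof
  assume unhit: "\<omega> \<in> unhit t"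
  show "t < stop T \<omega>"
  proof (cases "hits \<omega>")
    case True
    have "\<not> tau \<omega> \<le> t"
      using unhit b_tau[OF \<omega> True] tau_pos[OF \<omega> True] by (auto simp: unhit_def)
    then show ?thesis using True t by (simp add: stop_def)
  qed (use t in \<open>simp add: stop_def\<close>)
qed (use \<omega> b_before_stop[of \<omega> _ T] in \<open>auto simp: unhit_def\<close>)

lemma h_eq_lam_f_before_stop:
  assumes "\<omega> \<in> space M" "0 \<le> u" "u \<le> stop T \<omega>"
  shows "h (b u \<omega>) / 2 = lam * f (b u \<omega>)"
proof (rule h_eq_lam_f, rule b_not_beyond_target[OF assms(1,2)])
  fix r assume "0 \<le> r" "r < u"
  then show "b r \<omega> \<noteq> target" using assms(3) by (intro b_before_stop[OF assms(1), where T = T]) auto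
qed

lemma unhit_in_nat_filt:
  assumes t: "0 \<le> t"
  shows "unhit t \<in> nat_filt M b t"
proof -
  interpret F: sigma_algebra "space M" "nat_filt M b t"
    unfolding nat_filt_def by (rule sigma_algebra_sigma_sets) auto
  define near where "near m k j =
    {\<omega> \<in> space M. dist (b (grid t k j) \<omega>) target < inverse (real (Suc m))}" for m k j :: nat
  have near: "near m k j \<in> nat_filt M b t" if "j \<le> k" for m k j
  proof -
    have eq: "near m k j = b (grid t k j) -` ball target (inverse (real (Suc m))) \<inter> space M"
      by (auto simp: near_def dist_commute)
    have "0 \<le> grid t k j" "grid t k j \<le> t" using that t by (simp_all add: grid_nonneg grid_le)
    then show ?thesis unfolding nat_filt_def eq
      by (intro sigma_sets.Basic CollectI exI[of _ "grid t k j"]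
          exI[of _ "ball target (inverse (real (Suc m)))"]) auto
  qed
  have "(\<Union>k. \<Union>j\<in>{..k}. near m k j) \<in> nat_filt M b t" for m
    using near by (intro F.countable_UN'') auto
  then have "space M - (\<Inter>m. \<Union>k. \<Union>j\<in>{..k}. near m k j) \<in> nat_filt M b t"
    by (intro F.Diff F.top F.countable_INT') auto
  moreover have "unhit t = space M - (\<Inter>m. \<Union>k. \<Union>j\<in>{..k}. near m k j)"
  proof -
    have iff: "(\<forall>r\<in>{0..t}. b r \<omega> \<noteq> target) \<longleftrightarrow>
        \<not> (\<forall>m. \<exists>k j. j \<le> k \<and> dist (b (grid t k j) \<omega>) target < inverse (real (Suc m)))"
      if "\<omega> \<in> space M" for \<omega>
    proof -
      have "continuous_on {0..t} (\<lambda>r. b r \<omega>)"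
        by (rule continuous_on_subset[OF continuous_on_b[OF that]]) auto
      from continuous_on_hits_iff_grid[OF this t, of target] show ?thesis by blast
    qed
    have "unhit t = {\<omega> \<in> space M.
        \<not> (\<forall>m. \<exists>k j. j \<le> k \<and> dist (b (grid t k j) \<omega>) target < inverse (real (Suc m)))}"
      unfolding unhit_def by (rule Collect_cong) (use iff in blast)
    also have "\<dots> = space M - (\<Inter>m. \<Union>k. \<Union>j\<in>{..k}. near m k j)"
      by (auto simp: near_def) (meson atMost_iff)
    finally show ?thesis .
  qed
  ultimately show ?thesis by simp
qed

section \<open>Optional stopping\<close>

lemma nat_filt_subset_sets: "nat_filt M b t \<subseteq> sets M"
  unfolding nat_filt_def by (rule sets.sigma_sets_subset) auto

lemma f_path_bound: "\<omega> \<in> space M \<Longrightarrow> u \<ge> 0 \<Longrightarrow> \<bar>f (b u \<omega>)\<bar> \<le> f_bound"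
  and h_path_bound: "\<omega> \<in> space M \<Longrightarrow> u \<ge> 0 \<Longrightarrow> \<bar>h (b u \<omega>) / 2\<bar> \<le> h_bound / 2"
  using abs_f_le abs_h_le b_in_spider by auto

lemma
  assumes "\<omega> \<in> space M"
  shows continuous_on_f_path: "continuous_on {0..T} (\<lambda>u. f (b u \<omega>))"
    and continuous_on_h_path: "continuous_on {0..T} (\<lambda>u. h (b u \<omega>) / 2)"
proof -
  have b: "continuous_on {0..T} (\<lambda>u. b u \<omega>)"
    by (rule continuous_on_subset[OF continuous_on_b[OF assms]]) auto
  have "(\<lambda>u. b u \<omega>) ` {0..T} \<subseteq> spider N" using b_in_spider[OF assms] by auto
  note compose = continuous_on_compose2[OF _ b this]
  show "continuous_on {0..T} (\<lambda>u. f (b u \<omega>))" by (rule compose[OF continuous_on_f])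
  show "continuous_on {0..T} (\<lambda>u. h (b u \<omega>) / 2)"
    using compose[OF continuous_on_h] by (intro continuous_intros) auto
qed

text \<open>A Riemann-Stieltjes sum for f(0) + int_0^(stop T) e^(-lam t) dX t. The integrand on the
cell [T j / n, T (j + 1) / n] is fixed at its left end, where the event unhit (T j / n) is known,
so the martingale property gives every summand mean zero.\<close>

definition "riemann T n \<omega> = f 0 + (\<Sum>j<n. exp (- lam * grid T n (Suc j)) *
    ((X (grid T n (Suc j)) \<omega> - X (grid T n j) \<omega>) * indicator (unhit (grid T n j)) \<omega>))"

lemma integrable_riemann: "T > 0 \<Longrightarrow> integrable M (riemann T n)"
  and integral_riemann: "T > 0 \<Longrightarrow> integral\<^sup>L M (riemann T n) = C"
proof -
  assume T: "T > 0"
  interpret prob_space M by (rule prob_space_M)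
  define g where "g j \<omega> = exp (- lam * grid T n (Suc j)) *
    ((X (grid T n (Suc j)) \<omega> - X (grid T n j) \<omega>) * indicator (unhit (grid T n j)) \<omega>)" for j \<omega>
  have unhit: "unhit (grid T n j) \<in> nat_filt M b (grid T n j)" for j
    using unhit_in_nat_filt grid_nonneg T by simp
  have "integrable M (g j)" for j
    using is_martingale_X unhit[of j] nat_filt_subset_sets grid_nonneg[of T n] T
    unfolding g_def is_martingale_def
    by (intro integrable_mult_right integrable_real_mult_indicator Bochner_Integration.integrable_diff)
       auto
  moreover have "integral\<^sup>L M (g j) = 0" for j
    using is_martingale_X unhit[of j] grid_nonneg[of T n] grid_mono[of T j "Suc j" n] T
    unfolding g_def is_martingale_def by simp
  moreover have "riemann T n = (\<lambda>\<omega>. f 0 + (\<Sum>j<n. g j \<omega>))"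
    by (simp add: riemann_def[abs_def] g_def)
  ultimately show "integrable M (riemann T n)" "integral\<^sup>L M (riemann T n) = C"
    by (simp_all add: f_0 prob_space Bochner_Integration.integral_sum)
qed

lemma riemann_eq:
  assumes \<omega>: "\<omega> \<in> space M" and T: "T > 0"
  shows "riemann T n \<omega> = f 0 + grid_telescope T (stop T \<omega>) (\<lambda>u. exp (- lam * u) * f (b u \<omega>)) n
    - ibp_error_sum T lam (stop T \<omega>) (\<lambda>u. f (b u \<omega>)) (\<lambda>u. h (b u \<omega>) / 2) n"
proof -
  define \<sigma> where "\<sigma> = stop T \<omega>"
  define p where "p = (\<lambda>u. f (b u \<omega>))"
  define q where "q = (\<lambda>u. h (b u \<omega>) / 2)"
  have X: "X c \<omega> - X a \<omega> = p c - p a - (integral {0..c} q - integral {0..a} q)" for a c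
    by (simp add: X_def p_def q_def)
  have "exp (- lam * grid T n (Suc j)) *
      ((X (grid T n (Suc j)) \<omega> - X (grid T n j) \<omega>) * indicator (unhit (grid T n j)) \<omega>)
    = (if grid T n j < \<sigma> then exp (- lam * grid T n (Suc j)) * p (grid T n (Suc j))
         - exp (- lam * grid T n j) * p (grid T n j) else 0)
      - (if grid T n j < \<sigma> then ibp_error lam p q (grid T n j) (grid T n (Suc j)) else 0)"
    if "j < n" for j
  proof -
    have "indicator (unhit (grid T n j)) \<omega> = (if grid T n j < \<sigma> then 1 else (0::real))"
      using unhit_iff_before_stop[OF \<omega> grid_nonneg grid_less[OF T that]] T
      by (simp add: \<sigma>_def indicator_def)
    then show ?thesis by (simp add: X ibp_error_def algebra_simps)
  qed
  then have "riemann T n \<omega> = f 0 + (\<Sum>j<n.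
      (if grid T n j < \<sigma> then exp (- lam * grid T n (Suc j)) * p (grid T n (Suc j))
         - exp (- lam * grid T n j) * p (grid T n j) else 0)
      - (if grid T n j < \<sigma> then ibp_error lam p q (grid T n j) (grid T n (Suc j)) else 0))"
    unfolding riemann_def by simp
  also have "\<dots> = f 0 + grid_telescope T \<sigma> (\<lambda>u. exp (- lam * u) * p u) n
      - ibp_error_sum T lam \<sigma> p q n"
    by (simp only: grid_telescope_def ibp_error_sum_def sum_subtractf add_diff_eq)
  finally show ?thesis by (simp add: \<sigma>_def p_def q_def)
qed

definition "stopped T \<omega> = exp (- lam * stop T \<omega>) * f (b (stop T \<omega>) \<omega>)"

lemma abs_stopped_le: "\<omega> \<in> space M \<Longrightarrow> T > 0 \<Longrightarrow> \<bar>stopped T \<omega>\<bar> \<le> f_bound"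
  unfolding stopped_def using stop_bounds[of \<omega> T] lam_pos
  by (intro abs_exp_mult_le f_path_bound) auto

lemma riemann_tendsto_stopped:
  assumes \<omega>: "\<omega> \<in> space M" and T: "T > 0"
  shows "(\<lambda>n. riemann T n \<omega>) \<longlonglongrightarrow> stopped T \<omega>"
proof -
  have \<sigma>: "0 \<le> stop T \<omega>" "stop T \<omega> \<le> T" using stop_bounds[OF \<omega> T] by auto
  have "continuous_on {0..T} (\<lambda>u. exp (- lam * u) * f (b u \<omega>))"
    using continuous_on_f_path[OF \<omega>] by (intro continuous_intros)
  from grid_telescope_tendsto[OF T \<sigma> this]
  have "(\<lambda>n. grid_telescope T (stop T \<omega>) (\<lambda>u. exp (- lam * u) * f (b u \<omega>)) n)
      \<longlonglongrightarrow> stopped T \<omega> - f 0"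
    using b_0[OF \<omega>] by (simp add: stopped_def)
  moreover have "(\<lambda>n. ibp_error_sum T lam (stop T \<omega>) (\<lambda>u. f (b u \<omega>)) (\<lambda>u. h (b u \<omega>) / 2) n)
      \<longlonglongrightarrow> 0"
    using \<omega> \<sigma> by (intro ibp_error_sum_tendsto_0[OF T lam_pos continuous_on_f_path
        continuous_on_h_path _ f_path_bound h_path_bound] h_eq_lam_f_before_stop) auto
  ultimately have "(\<lambda>n. f 0 + grid_telescope T (stop T \<omega>) (\<lambda>u. exp (- lam * u) * f (b u \<omega>)) n
      - ibp_error_sum T lam (stop T \<omega>) (\<lambda>u. f (b u \<omega>)) (\<lambda>u. h (b u \<omega>) / 2) n)
      \<longlonglongrightarrow> f 0 + (stopped T \<omega> - f 0) - 0"
    by (intro tendsto_intros)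
  then show ?thesis using riemann_eq[OF \<omega> T] by simp
qed

lemma abs_riemann_le:
  assumes \<omega>: "\<omega> \<in> space M" and T: "T > 0"
  shows "\<bar>riemann T n \<omega>\<bar> \<le> 3 * f_bound + T * (h_bound / 2 + lam * f_bound)"
proof -
  have \<sigma>: "0 \<le> stop T \<omega>" "stop T \<omega> \<le> T" using stop_bounds[OF \<omega> T] by auto
  have "\<bar>f 0\<bar> \<le> f_bound" using f_path_bound[OF \<omega>, of 0] b_0[OF \<omega>] by simp
  moreover have "\<bar>grid_telescope T (stop T \<omega>) (\<lambda>u. exp (- lam * u) * f (b u \<omega>)) n\<bar> \<le> 2 * f_bound"
    using \<omega> lam_pos
    by (intro grid_telescope_bound[OF T \<sigma>] abs_exp_mult_le f_path_bound) auto
  moreover have "\<bar>ibp_error_sum T lam (stop T \<omega>) (\<lambda>u. f (b u \<omega>)) (\<lambda>u. h (b u \<omega>) / 2) n\<bar>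
      \<le> T * (h_bound / 2 + lam * f_bound)"
    using \<omega> by (intro ibp_error_sum_bound[OF T lam_pos continuous_on_h_path f_path_bound
        h_path_bound]) auto
  ultimately show ?thesis unfolding riemann_eq[OF \<omega> T] by linarith
qed

lemma
  assumes "T > 0"
  shows measurable_stopped: "stopped T \<in> borel_measurable M"
    and integral_stopped: "integral\<^sup>L M (stopped T) = C"
proof -
  interpret prob_space M by (rule prob_space_M)
  have "riemann T n \<in> borel_measurable M" for n
    using integrable_riemann[OF assms] by auto
  note convergence = bounded_convergence[OF this riemann_tendsto_stopped[OF _ assms]
      abs_riemann_le[OF _ assms]]
  show "stopped T \<in> borel_measurable M" by (rule convergence(1))
  show "integral\<^sup>L M (stopped T) = C"
    using convergence(2) integral_riemann[OF assms] by (simp add: LIMSEQ_const_iff)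
qed

lemma stopped_tendsto_hit:
  assumes \<omega>: "\<omega> \<in> space M"
  shows "(\<lambda>k. stopped (real (Suc k)) \<omega>) \<longlonglongrightarrow> (if hits \<omega> then exp (- lam * tau \<omega>) else 0)"
proof (cases "hits \<omega>")
  case True
  have "\<forall>\<^sub>F k in sequentially. stopped (real (Suc k)) \<omega> = exp (- lam * tau \<omega>)"
    unfolding eventually_sequentially
  proof (intro exI allI impI)
    fix k assume "nat \<lceil>tau \<omega>\<rceil> \<le> k"
    then have "tau \<omega> \<le> real (Suc k)" by linarith
    then show "stopped (real (Suc k)) \<omega> = exp (- lam * tau \<omega>)"
      using True b_tau[OF \<omega> True] f_target by (simp add: stopped_def stop_def)
  qed
  then show ?thesis using True by (simp add: tendsto_eventually)
next
  case False
  have bound: "norm (stopped (real (Suc k)) \<omega>) \<le> f_bound * exp (- lam) ^ Suc k" for k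
  proof -
    have "exp (- lam * real (Suc k)) = exp (- lam) ^ Suc k"
      by (metis exp_of_nat_mult mult.commute)
    then show ?thesis using False f_path_bound[OF \<omega>, of "real (Suc k)"]
      by (simp add: stopped_def stop_def abs_mult mult.commute mult_left_mono del: power_Suc)
  qed
  have "norm (exp (- lam)) < 1" using lam_pos by simp
  from tendsto_mult_left[OF LIMSEQ_power_zero[OF this], of f_bound]
  have "(\<lambda>k. f_bound * exp (- lam) ^ k) \<longlonglongrightarrow> 0" by simp
  then have "(\<lambda>k. f_bound * exp (- lam) ^ Suc k) \<longlonglongrightarrow> 0" by (rule LIMSEQ_Suc)
  from Lim_null_comparison[OF always_eventually[OF allI[OF bound]] this]
  have "(\<lambda>k. stopped (real (Suc k)) \<omega>) \<longlonglongrightarrow> 0" .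
  then show ?thesis using False by simp
qed

lemma hit_laplace_eq_C: "hit_laplace M b lam L = C"
proof -
  interpret prob_space M by (rule prob_space_M)
  note convergence = bounded_convergence[of "\<lambda>k. stopped (real (Suc k))", OF measurable_stopped
      stopped_tendsto_hit abs_stopped_le]
  have "integral\<^sup>L M (\<lambda>\<omega>. if hits \<omega> then exp (- lam * tau \<omega>) else 0) = C"
    using convergence(2) integral_stopped by (simp add: LIMSEQ_const_iff)
  then show ?thesis unfolding hit_laplace_def hits_def[symmetric] tau_def[symmetric] .
qed

end

theorem theorem2p4:
  fixes N :: nat and M :: "'a measure" and b :: "real \<Rightarrow> 'a \<Rightarrow> complex"
    and lam L :: real
  assumes "N \<ge> 2" and "spider_BM N M b" and "lam > 0" and "L > 0"
  shows "(\<lambda>n. 2 / real N * (1 - 2 / real N) ^ n * exp (- real (2 * n + 1) * sqrt (2 * lam) * L))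
           sums hit_laplace M b lam L"
proof -
  interpret spider_BM_hitting N lam L M b
    by unfold_locales (use assms in auto)
  show ?thesis using C_sums hit_laplace_eq_C by simp
qed

end
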